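(* Let $\boldsymbol{\mu}_+,\boldsymbol{\mu}_-\in\mathbb{R}^d$, $\sigma>0$, and let $(\boldsymbol{X},Y)$ be random with $P(Y=+)=P(Y=-)=1/2$ and $\boldsymbol{X}\mid Y=i\sim N(\boldsymbol{\mu}_i,\sigma^2\boldsymbol{I}_d)$ for $i\in\{+,-\}$. Let $\boldsymbol{w}\in\mathbb{R}^d\setminus\{\boldsymbol{0}\}$, $b\in\mathbb{R}$ and let the linear classifier assign $\boldsymbol{x}$ to class $+$ if $\boldsymbol{w}\cdot\boldsymbol{x}+b>0$ and to class $-$ otherwise. Let $\varepsilon>0$. Put $\boldsymbol{\mu}=\frac12(\boldsymbol{\mu}_+-\boldsymbol{\mu}_-)$, $\bar{\boldsymbol{\mu}}=\frac12(\boldsymbol{\mu}_++\boldsymbol{\mu}_-)$, $b'=\boldsymbol{w}\cdot\bar{\boldsymbol{\mu}}+b$. Let $p_m$ be the probability that $\boldsymbol{X}$ is misclassified and $p_{adv}$ the probability that $\boldsymbol{X}$ is correctly classified and has an $\varepsilon$-adversarial example. Then $$p_{adv}=1-p_m-\frac12\left[\Phi\!\left(\frac{\boldsymbol{w}\cdot\boldsymbol{\mu}+b'}{\|\boldsymbol{w}\|\sigma}-\frac{\varepsilon}{\sigma}\right)+\Phi\!\left(\frac{\boldsymbol{w}\cdot\boldsymbol{\mu}-b'}{\|\boldsymbol{w}\|\sigma}-\frac{\varepsilon}{\sigma}\right)\right].$$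
   Context: $\Phi$ is the standard normal CDF and $\|\cdot\|$ the Euclidean norm. An $\varepsilon$-adversarial example of $\boldsymbol{x}$ is a point $\boldsymbol{x}'$ with $\|\boldsymbol{x}-\boldsymbol{x}'\|\le\varepsilon$ that is assigned a different class than $\boldsymbol{x}$ by the classifier. *)

theory Defs
  imports "HOL-Probability.Probability"
begin

definition Phi :: "real \<Rightarrow> real" where
  "Phi x = measure (density lborel (\<lambda>t. ennreal (std_normal_density t))) {..x}"

definition gauss_density :: "'a::euclidean_space \<Rightarrow> real \<Rightarrow> 'a \<Rightarrow> real" where
  "gauss_density mu sig x =
     (2 * pi * sig^2) powr (- real DIM('a) / 2) * exp (- ((norm (x - mu)) ^ 2) / (2 * sig ^ 2))"

definition gauss_measure :: "'a::euclidean_space \<Rightarrow> real \<Rightarrow> 'a measure" where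
  "gauss_measure mu sig = density lborel (\<lambda>x. ennreal (gauss_density mu sig x))"

text \<open>Linear classifier: True means class +, False means class -.\<close>
definition lin_classify :: "'a::euclidean_space \<Rightarrow> real \<Rightarrow> 'a \<Rightarrow> bool" where
  "lin_classify w b x = (w \<bullet> x + b > 0)"

definition has_adv_example :: "'a::euclidean_space \<Rightarrow> real \<Rightarrow> real \<Rightarrow> 'a \<Rightarrow> bool" where
  "has_adv_example w b eps x =
     (\<exists>x'. norm (x - x') \<le> eps \<and> lin_classify w b x' \<noteq> lin_classify w b x)"

end

theory Submission
  imports Defs
begin

(*
  For fixed x the map y |-> w . y sends the closed ball of radius eps around x onto the
  interval of radius eps * |w| around w . x. Hence a correctly classified point is robust
  exactly when its margin w . x + b lies beyond eps * |w| on its own side, and p_adv is the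
  probability of being correct minus the probabilities of two half-spaces, one under each
  class. Under N(mu, sig^2 I) the projection w . X is N(w . mu, |w|^2 sig^2): the isotropic
  Gaussian is the image of the product of its independent one-dimensional coordinate laws,
  and a linear combination of independent normals is normal.
*)

lemma inner_image_cball:
  fixes w x :: "'a::real_inner"
  assumes "0 \<le> e"
  shows "(\<lambda>y. w \<bullet> y) ` cball x e = {w \<bullet> x - e * norm w .. w \<bullet> x + e * norm w}"
proof (intro antisym subsetI)
  fix t assume "t \<in> (\<lambda>y. w \<bullet> y) ` cball x e"
  then obtain y where y: "dist x y \<le> e" "t = w \<bullet> y" by auto
  have "\<bar>w \<bullet> y - w \<bullet> x\<bar> \<le> norm w * norm (y - x)"
    using Cauchy_Schwarz_ineq2[of w "y - x"] by (simp add: inner_diff_right)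
  also have "\<dots> \<le> e * norm w"
    using y(1) mult_left_mono[of "norm (y - x)" e "norm w"]
    by (simp add: dist_norm norm_minus_commute mult.commute)
  finally show "t \<in> {w \<bullet> x - e * norm w .. w \<bullet> x + e * norm w}" using y(2) by auto
next
  fix t assume t: "t \<in> {w \<bullet> x - e * norm w .. w \<bullet> x + e * norm w}"
  show "t \<in> (\<lambda>y. w \<bullet> y) ` cball x e"
  proof (cases "w = 0")
    case True
    with t show ?thesis using assms by (auto intro: image_eqI[of _ _ x])
  next
    case False
    define y where "y = x + ((t - w \<bullet> x) / (w \<bullet> w)) *\<^sub>R w"
    have "w \<bullet> y = t" using False by (simp add: y_def inner_add_right)
    moreover have "dist x y = \<bar>t - w \<bullet> x\<bar> / norm w"
      using False by (simp add: y_def dist_norm power2_norm_eq_inner[symmetric] power2_eq_square)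
    moreover have "\<bar>t - w \<bullet> x\<bar> \<le> e * norm w" using t by auto
    ultimately show ?thesis using False by (auto simp: divide_le_eq intro!: image_eqI[of _ _ y])
  qed
qed

definition robustly_classified :: "'a::real_inner \<Rightarrow> real \<Rightarrow> real \<Rightarrow> 'a \<Rightarrow> bool \<Rightarrow> bool" where
  "robustly_classified w b eps x y \<longleftrightarrow>
     (if y then eps * norm w < w \<bullet> x + b else w \<bullet> x + b \<le> - (eps * norm w))"

lemma robustly_classified_imp_lin_classify_eq:
  assumes "0 \<le> eps" and "robustly_classified w b eps x y"
  shows "lin_classify w b x = y"
proof -
  have "0 \<le> eps * norm w" using assms(1) by simp
  with assms(2) show ?thesis by (cases y) (auto simp: robustly_classified_def lin_classify_def)
qed

lemma has_adv_example_iff: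
  fixes w x :: "'a::euclidean_space"
  assumes "0 \<le> eps"
  shows "has_adv_example w b eps x \<longleftrightarrow> \<not> robustly_classified w b eps x (lin_classify w b x)"
proof -
  have "has_adv_example w b eps x \<longleftrightarrow>
      (\<exists>t\<in>(\<lambda>y. w \<bullet> y) ` cball x eps. (t + b > 0) \<noteq> lin_classify w b x)"
    by (auto simp: has_adv_example_def lin_classify_def dist_norm)
  also have "\<dots> \<longleftrightarrow> \<not> robustly_classified w b eps x (lin_classify w b x)"
    unfolding inner_image_cball[OF assms] robustly_classified_def lin_classify_def
    by (cases "w \<bullet> x + b > 0")
       (auto intro: bexI[of _ "w \<bullet> x - eps * norm w"] bexI[of _ "w \<bullet> x + eps * norm w"])
  finally show ?thesis .
qed

lemma power2_norm_eq_sum_Basis: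
  fixes x :: "'a::euclidean_space"
  shows "(norm x)\<^sup>2 = (\<Sum>b\<in>Basis. (x \<bullet> b)\<^sup>2)"
  unfolding power2_norm_eq_inner euclidean_inner[of x x] by (simp add: power2_eq_square)

lemma density_PiM_lborel_prod:
  fixes g :: "'i \<Rightarrow> real \<Rightarrow> real"
  assumes fin: "finite I" and [measurable]: "\<And>i. g i \<in> borel_measurable borel"
    and nonneg: "\<And>i x. 0 \<le> g i x"
    and sigma_finite: "\<And>i. sigma_finite_measure (density lborel (\<lambda>x. ennreal (g i x)))"
  shows "density (PiM I (\<lambda>_. lborel)) (\<lambda>f. ennreal (\<Prod>i\<in>I. g i (f i)))
       = PiM I (\<lambda>i. density lborel (\<lambda>x. ennreal (g i x)))"
proof -
  interpret D: product_sigma_finite "\<lambda>i. density lborel (\<lambda>x. ennreal (g i x))"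
    unfolding product_sigma_finite_def using sigma_finite by blast
  interpret L: product_sigma_finite "\<lambda>_::'i. lborel :: real measure"
    by standard
  show ?thesis
  proof (rule D.PiM_eqI[OF fin])
    fix A assume "\<And>i. i \<in> I \<Longrightarrow> A i \<in> sets (density lborel (\<lambda>x. ennreal (g i x)))"
    then have A[measurable]: "\<And>i. i \<in> I \<Longrightarrow> A i \<in> sets borel" by simp
    have "Pi\<^sub>E I A \<in> sets (PiM I (\<lambda>_. lborel))"
      by (intro sets_PiM_I_finite fin) auto
    then have "emeasure (density (PiM I (\<lambda>_. lborel)) (\<lambda>f. ennreal (\<Prod>i\<in>I. g i (f i)))) (Pi\<^sub>E I A)
       = (\<integral>\<^sup>+ f. ennreal (\<Prod>i\<in>I. g i (f i)) * indicator (Pi\<^sub>E I A) f \<partial>PiM I (\<lambda>_. lborel))"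
      by (simp add: emeasure_density)
    also have "\<dots> = (\<integral>\<^sup>+ f. (\<Prod>i\<in>I. ennreal (g i (f i)) * indicator (A i) (f i)) \<partial>PiM I (\<lambda>_. lborel))"
      using fin
      by (intro nn_integral_cong)
         (auto simp: indicator_def PiE_iff space_PiM prod_ennreal[symmetric] nonneg prod_nonneg
                     prod.distrib[symmetric] intro: prod_zero)
    also have "\<dots> = (\<Prod>i\<in>I. \<integral>\<^sup>+ x. ennreal (g i x) * indicator (A i) x \<partial>lborel)"
      by (intro L.product_nn_integral_prod fin) auto
    also have "\<dots> = (\<Prod>i\<in>I. emeasure (density lborel (\<lambda>x. ennreal (g i x))) (A i))"
      by (intro prod.cong refl) (simp add: emeasure_density)
    finally show "emeasure (density (PiM I (\<lambda>_. lborel)) (\<lambda>f. ennreal (\<Prod>i\<in>I. g i (f i)))) (Pi\<^sub>E I A)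
       = (\<Prod>i\<in>I. emeasure (density lborel (\<lambda>x. ennreal (g i x))) (A i))" .
  qed (auto intro!: sets_PiM_cong)
qed

lemma indep_vars_PiM_components:
  assumes "I \<noteq> {}" and M: "\<And>i. i \<in> I \<Longrightarrow> prob_space (M i)"
  shows "prob_space.indep_vars (PiM I M) M (\<lambda>i \<omega>. \<omega> i) I"
proof -
  interpret prob_space "PiM I M" using M by (rule prob_space_PiM)
  have "distr (PiM I M) (PiM I M) (\<lambda>\<omega>. \<lambda>i\<in>I. \<omega> i) = distr (PiM I M) (PiM I M) (\<lambda>\<omega>. \<omega>)"
    by (rule distr_cong) (auto simp: space_PiM PiE_def extensional_restrict)
  also have "\<dots> = PiM I (\<lambda>i. distr (PiM I M) (M i) (\<lambda>\<omega>. \<omega> i))"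
    using M by (simp add: distr_PiM_component cong: PiM_cong)
  finally show ?thesis
    using assms(1) by (subst indep_vars_iff_distr_eq_PiM') auto
qed

lemma gauss_density_Basis_prod:
  fixes mu :: "'a::euclidean_space"
  assumes "0 < sig"
  shows "gauss_density mu sig (\<Sum>b\<in>Basis. f b *\<^sub>R b)
       = (\<Prod>b\<in>Basis. normal_density (mu \<bullet> b) sig (f b))"
proof -
  let ?c = "2 * pi * sig\<^sup>2"
  have "(norm ((\<Sum>b\<in>Basis. f b *\<^sub>R b) - mu))\<^sup>2 = (\<Sum>b\<in>Basis. (f b - mu \<bullet> b)\<^sup>2)"
    by (simp add: power2_norm_eq_sum_Basis inner_diff_left)
  moreover have "?c powr (- real DIM('a) / 2) = (1 / sqrt ?c) ^ DIM('a)"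
    using assms powr_power[of ?c "-1/2" "DIM('a)"]
    by (simp add: powr_minus_divide powr_half_sqrt)
  ultimately have "gauss_density mu sig (\<Sum>b\<in>Basis. f b *\<^sub>R b)
      = (1 / sqrt ?c) ^ DIM('a) * exp (\<Sum>b\<in>Basis. - ((f b - mu \<bullet> b)\<^sup>2) / (2 * sig\<^sup>2))"
    by (simp add: gauss_density_def sum_negf sum_divide_distrib)
  also have "\<dots> = (\<Prod>b\<in>Basis. 1 / sqrt ?c * exp (- ((f b - mu \<bullet> b)\<^sup>2) / (2 * sig\<^sup>2)))"
    by (simp only: exp_sum prod.distrib prod_constant finite_Basis)
  finally show ?thesis by (simp add: normal_density_def)
qed

definition gauss_coords :: "'a::euclidean_space \<Rightarrow> real \<Rightarrow> ('a \<Rightarrow> real) measure" where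
  "gauss_coords mu sig = PiM Basis (\<lambda>b. density lborel (\<lambda>x. ennreal (normal_density (mu \<bullet> b) sig x)))"

lemma sets_gauss_coords:
  "sets (gauss_coords mu sig) = sets (PiM Basis (\<lambda>_. borel))"
  unfolding gauss_coords_def by (rule sets_PiM_cong) simp_all

lemma prob_space_gauss_coords: "0 < sig \<Longrightarrow> prob_space (gauss_coords mu sig)"
  unfolding gauss_coords_def by (intro prob_space_PiM prob_space_normal_density)

lemma gauss_measure_eq_distr_coords:
  fixes mu :: "'a::euclidean_space"
  assumes "0 < sig"
  shows "gauss_measure mu sig = distr (gauss_coords mu sig) borel (\<lambda>f. \<Sum>b\<in>Basis. f b *\<^sub>R b)"
proof -
  let ?T = "\<lambda>f::'a \<Rightarrow> real. \<Sum>b\<in>Basis. f b *\<^sub>R b"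
  have [measurable]: "(\<lambda>x. ennreal (gauss_density mu sig x)) \<in> borel_measurable (borel :: 'a measure)"
    unfolding gauss_density_def by measurable
  have "gauss_measure mu sig
      = density (distr (PiM Basis (\<lambda>_. lborel)) borel ?T) (\<lambda>x. ennreal (gauss_density mu sig x))"
    unfolding gauss_measure_def by (subst lborel_eq[where 'a='a]) (rule refl)
  also have "\<dots> = distr (density (PiM Basis (\<lambda>_. lborel))
                            (\<lambda>f. ennreal (gauss_density mu sig (?T f)))) borel ?T"
    by (rule density_distr) measurable
  also have "\<dots> = distr (gauss_coords mu sig) borel ?T"
    using assms
    by (simp add: gauss_density_Basis_prod gauss_coords_def prob_space_normal_density
                  prob_space_imp_sigma_finite
                  density_PiM_lborel_prod[where g = "\<lambda>b. normal_density (mu \<bullet> b) sig"])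
  finally show ?thesis .
qed

lemma distributed_gauss_coords_component:
  fixes mu :: "'a::euclidean_space"
  assumes "b \<in> Basis" and "0 < sig"
  shows "distributed (gauss_coords mu sig) lborel (\<lambda>f. f b) (normal_density (mu \<bullet> b) sig)"
proof -
  have "distr (gauss_coords mu sig) lborel (\<lambda>f. f b)
      = distr (gauss_coords mu sig) (density lborel (\<lambda>x. ennreal (normal_density (mu \<bullet> b) sig x))) (\<lambda>f. f b)"
    by (rule distr_cong) auto
  also have "\<dots> = density lborel (\<lambda>x. ennreal (normal_density (mu \<bullet> b) sig x))"
    unfolding gauss_coords_def using assms by (intro distr_PiM_component prob_space_normal_density)
  finally show ?thesis
    using assms(1) by (simp add: distributed_def gauss_coords_def)
qed

lemma indep_vars_gauss_coords:
  assumes "0 < sig"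
  shows "prob_space.indep_vars (gauss_coords mu sig) (\<lambda>_. borel) (\<lambda>b f. f b) Basis"
proof -
  interpret prob_space "gauss_coords mu sig" using assms by (rule prob_space_gauss_coords)
  have "indep_vars (\<lambda>b. density lborel (\<lambda>x. ennreal (normal_density (mu \<bullet> b) sig x)))
      (\<lambda>b f. f b) Basis"
    unfolding gauss_coords_def using assms
    by (intro indep_vars_PiM_components prob_space_normal_density) auto
  then show ?thesis by (rule indep_vars_compose2[where Y = "\<lambda>_ x. x"]) simp
qed

lemma distributed_gauss_coords_inner:
  fixes mu w :: "'a::euclidean_space"
  assumes sig: "0 < sig" and "w \<noteq> 0"
  shows "distributed (gauss_coords mu sig) lborel (\<lambda>f. \<Sum>b\<in>Basis. (w \<bullet> b) * f b)
           (normal_density (w \<bullet> mu) (norm w * sig))"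
proof -
  interpret prob_space "gauss_coords mu sig" using sig by (rule prob_space_gauss_coords)
  \<comment> \<open>Coordinates with w \<bullet> b = 0 are dropped: sum_indep_normal needs positive variances.\<close>
  define I where "I = {b\<in>Basis. w \<bullet> b \<noteq> 0}"
  have I: "finite I" "I \<subseteq> Basis" by (auto simp: I_def)
  moreover have "I \<noteq> {}"
    using \<open>w \<noteq> 0\<close> euclidean_all_zero_iff[of w] by (auto simp: I_def)
  moreover have "indep_vars (\<lambda>_. borel) (\<lambda>b f. (w \<bullet> b) * f b) I"
  proof -
    have "indep_vars (\<lambda>_. borel) (\<lambda>b f. (w \<bullet> b) * f b) Basis"
      using indep_vars_gauss_coords[OF sig] by (rule indep_vars_compose2) simp
    then show ?thesis using I(2) by (rule indep_vars_subset)
  qed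
  moreover have "distributed (gauss_coords mu sig) lborel (\<lambda>f. (w \<bullet> b) * f b)
      (normal_density ((w \<bullet> b) * (mu \<bullet> b)) (\<bar>w \<bullet> b\<bar> * sig))" if "b \<in> I" for b
  proof -
    have b: "b \<in> Basis" "w \<bullet> b \<noteq> 0" using that by (auto simp: I_def)
    show ?thesis
      using normal_density_affine[OF distributed_gauss_coords_component[OF b(1) sig] sig b(2), of 0]
      by simp
  qed
  ultimately have "distributed (gauss_coords mu sig) lborel (\<lambda>f. \<Sum>b\<in>I. (w \<bullet> b) * f b)
      (normal_density (\<Sum>b\<in>I. (w \<bullet> b) * (mu \<bullet> b)) (sqrt (\<Sum>b\<in>I. (\<bar>w \<bullet> b\<bar> * sig)\<^sup>2)))"
    using I sig by (intro sum_indep_normal) (auto simp: I_def)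
  moreover have sum_I: "(\<Sum>b\<in>I. h b) = (\<Sum>b\<in>Basis. h b)"
    if "\<And>b. w \<bullet> b = 0 \<Longrightarrow> h b = 0" for h :: "'a \<Rightarrow> real"
    using that by (intro sum.mono_neutral_left) (auto simp: I_def)
  moreover have "(\<Sum>b\<in>I. (w \<bullet> b) * (mu \<bullet> b)) = w \<bullet> mu"
    using sum_I[of "\<lambda>b. (w \<bullet> b) * (mu \<bullet> b)"] by (simp add: euclidean_inner[of w mu])
  moreover have "sqrt (\<Sum>b\<in>I. (\<bar>w \<bullet> b\<bar> * sig)\<^sup>2) = norm w * sig"
    using sig sum_I[of "\<lambda>b. (w \<bullet> b)\<^sup>2"]
    by (simp add: power_mult_distrib sum_distrib_right[symmetric] real_sqrt_mult
                  power2_norm_eq_sum_Basis[symmetric])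
  ultimately show ?thesis
    using sum_I[of "\<lambda>b. (w \<bullet> b) * f b" for f] by simp
qed

lemma distributed_gauss_measure_inner:
  fixes mu w :: "'a::euclidean_space"
  assumes "0 < sig" and "w \<noteq> 0"
  shows "distributed (gauss_measure mu sig) lborel (\<lambda>x. w \<bullet> x) (normal_density (w \<bullet> mu) (norm w * sig))"
proof -
  have "(\<lambda>f. \<Sum>b\<in>Basis. (w \<bullet> b) * f b) = (\<lambda>x. w \<bullet> x) \<circ> (\<lambda>f. \<Sum>b\<in>Basis. f b *\<^sub>R b)"
    by (simp add: fun_eq_iff inner_sum_right mult.commute)
  then show ?thesis
    using distributed_gauss_coords_inner[OF assms]
    unfolding gauss_measure_eq_distr_coords[OF assms(1)] distributed_def
    by (subst distr_distr) (auto simp: gauss_coords_def)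
qed

lemma prob_space_gauss_measure:
  assumes "0 < sig"
  shows "prob_space (gauss_measure mu sig)"
proof -
  have "(\<lambda>f. \<Sum>b\<in>Basis. f b *\<^sub>R b) \<in> measurable (PiM Basis (\<lambda>_. borel)) (borel :: 'a measure)"
    by measurable
  then show ?thesis
    unfolding gauss_measure_eq_distr_coords[OF assms]
    by (intro prob_space.prob_space_distr prob_space_gauss_coords assms)
       (simp add: measurable_cong_sets[OF sets_gauss_coords refl])
qed

lemma (in prob_space) prob_normal_le_eq_Phi:
  assumes Z: "distributed M lborel Z (normal_density m s)" and "0 < s"
  shows "prob {x\<in>space M. Z x \<le> c} = Phi ((c - m) / s)"
proof -
  have std: "distributed M lborel (\<lambda>x. (Z x - m) / s) std_normal_density"
    using normal_standard_normal_convert[OF \<open>0 < s\<close>, of Z m] Z by simp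
  have "Phi ((c - m) / s) = prob ((\<lambda>x. (Z x - m) / s) -` {..(c - m) / s} \<inter> space M)"
    unfolding Phi_def distributed_distr_eq_density[OF std, symmetric]
    by (rule measure_distr) (use std in \<open>simp_all add: distributed_def\<close>)
  also have "(\<lambda>x. (Z x - m) / s) -` {..(c - m) / s} \<inter> space M = {x\<in>space M. Z x \<le> c}"
    using \<open>0 < s\<close> by (auto simp: divide_le_cancel)
  finally show ?thesis ..
qed

lemma (in prob_space) prob_eq_0_if_distributed_lborel:
  assumes "distributed M lborel Z f"
  shows "prob {x\<in>space M. Z x = c} = 0"
proof -
  have "AE x in lborel. f x * indicator {c} x = 0"
    using AE_lborel_singleton[of c] by eventually_elim simp
  then have "emeasure M (Z -` {c} \<inter> space M) = 0"
    using distributed_emeasure[OF assms, of "{c}"] by (simp add: nn_integral_0_iff_AE)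
  moreover have "{x\<in>space M. Z x = c} = Z -` {c} \<inter> space M" by auto
  ultimately show ?thesis by (simp add: measure_def)
qed

lemma (in prob_space) prob_normal_gt_eq_Phi:
  assumes Z: "distributed M lborel Z (normal_density m s)" and "0 < s"
  shows "prob {x\<in>space M. Z x > c} = Phi ((m - c) / s)"
proof -
  have [measurable]: "Z \<in> borel_measurable M"
    using Z by (simp add: distributed_def)
  have "distributed M lborel (\<lambda>x. 0 + (-1) * Z x) (normal_density (0 + (-1) * m) (\<bar>-1\<bar> * s))"
    using Z \<open>0 < s\<close> by (rule normal_density_affine) simp
  then have "Phi ((m - c) / s) = prob {x\<in>space M. - Z x \<le> - c}"
    using prob_normal_le_eq_Phi[of "\<lambda>x. - Z x" "- m" s "- c"] \<open>0 < s\<close> by simp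
  also have "\<dots> = prob ({x\<in>space M. Z x > c} \<union> {x\<in>space M. Z x = c})"
    by (rule arg_cong[where f = prob]) auto
  also have "\<dots> = prob {x\<in>space M. Z x > c} + prob {x\<in>space M. Z x = c}"
    by (rule finite_measure_Union) (measurable, auto)
  also have "prob {x\<in>space M. Z x = c} = 0"
    using Z by (rule prob_eq_0_if_distributed_lborel)
  finally show ?thesis by simp
qed

lemma measure_gauss_halfspace_le:
  fixes mu w :: "'a::euclidean_space"
  assumes "0 < sig" and "w \<noteq> 0"
  shows "measure (gauss_measure mu sig) {x. w \<bullet> x \<le> c} = Phi ((c - w \<bullet> mu) / (norm w * sig))"
proof -
  interpret prob_space "gauss_measure mu sig" using assms(1) by (rule prob_space_gauss_measure)
  have "space (gauss_measure mu sig) = UNIV" by (simp add: gauss_measure_def)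
  then show ?thesis
    using prob_normal_le_eq_Phi[OF distributed_gauss_measure_inner[OF assms]] assms by simp
qed

lemma measure_gauss_halfspace_gt:
  fixes mu w :: "'a::euclidean_space"
  assumes "0 < sig" and "w \<noteq> 0"
  shows "measure (gauss_measure mu sig) {x. w \<bullet> x > c} = Phi ((w \<bullet> mu - c) / (norm w * sig))"
proof -
  interpret prob_space "gauss_measure mu sig" using assms(1) by (rule prob_space_gauss_measure)
  have "space (gauss_measure mu sig) = UNIV" by (simp add: gauss_measure_def)
  then show ?thesis
    using prob_normal_gt_eq_Phi[OF distributed_gauss_measure_inner[OF assms]] assms by simp
qed

lemma (in prob_space) prob_robustly_classified:
  fixes X :: "'a \<Rightarrow> 'b::euclidean_space"
  assumes [measurable]: "X \<in> borel_measurable M" "Y \<in> measurable M (count_space UNIV)"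
    and "0 < sig" and "w \<noteq> 0"
    and joint: "\<And>A i. A \<in> sets borel \<Longrightarrow>
        prob {s \<in> space M. X s \<in> A \<and> Y s = i}
          = (1/2) * measure (gauss_measure (if i then mu_p else mu_m) sig) A"
  shows "prob {s\<in>space M. robustly_classified w b eps (X s) (Y s)}
       = (1/2) * (Phi ((w \<bullet> mu_p + b) / (norm w * sig) - eps / sig)
                + Phi (- (w \<bullet> mu_m + b) / (norm w * sig) - eps / sig))"
proof -
  let ?r = "eps * norm w"
  have args: "(w \<bullet> mu_p - (?r - b)) / (norm w * sig) = (w \<bullet> mu_p + b) / (norm w * sig) - eps / sig"
    "(- ?r - b - w \<bullet> mu_m) / (norm w * sig) = - (w \<bullet> mu_m + b) / (norm w * sig) - eps / sig"
    using \<open>0 < sig\<close> \<open>w \<noteq> 0\<close> by (simp_all add: field_simps)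
  have "{s\<in>space M. robustly_classified w b eps (X s) (Y s)}
      = {s\<in>space M. X s \<in> {x. ?r - b < w \<bullet> x} \<and> Y s = True}
      \<union> {s\<in>space M. X s \<in> {x. w \<bullet> x \<le> - ?r - b} \<and> Y s = False}"
    by (auto simp: robustly_classified_def)
  also have "prob \<dots> = prob {s\<in>space M. X s \<in> {x. ?r - b < w \<bullet> x} \<and> Y s = True}
                    + prob {s\<in>space M. X s \<in> {x. w \<bullet> x \<le> - ?r - b} \<and> Y s = False}"
    by (rule finite_measure_Union) (measurable, auto)
  also have "\<dots> = (1/2) * (Phi ((w \<bullet> mu_p + b) / (norm w * sig) - eps / sig)
                         + Phi (- (w \<bullet> mu_m + b) / (norm w * sig) - eps / sig))"
    using \<open>0 < sig\<close> \<open>w \<noteq> 0\<close> args joint[of "{x. ?r - b < w \<bullet> x}" True]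
      joint[of "{x. w \<bullet> x \<le> - ?r - b}" False]
    by (simp add: measure_gauss_halfspace_gt measure_gauss_halfspace_le)
  finally show ?thesis .
qed

theorem theorem1:
  fixes M :: "'s measure" and X :: "'s \<Rightarrow> 'a::euclidean_space" and Y :: "'s \<Rightarrow> bool"
    and mu_p mu_m w :: 'a and sig b eps :: real
  assumes "prob_space M"
    and "X \<in> borel_measurable M"
    and "Y \<in> measurable M (count_space UNIV)"
    and "sig > 0"
    and "w \<noteq> 0"
    and "eps > 0"
    and joint: "\<And>A i. A \<in> sets borel \<Longrightarrow>
        measure M {s \<in> space M. X s \<in> A \<and> Y s = i}
          = (1/2) * measure (gauss_measure (if i then mu_p else mu_m) sig) A"
  shows "let mu = (1/2) *\<^sub>R (mu_p - mu_m);
             mubar = (1/2) *\<^sub>R (mu_p + mu_m);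
             b' = w \<bullet> mubar + b;
             p_m = measure M {s \<in> space M. lin_classify w b (X s) \<noteq> Y s};
             p_adv = measure M {s \<in> space M. lin_classify w b (X s) = Y s
                                    \<and> has_adv_example w b eps (X s)}
         in p_adv = 1 - p_m - (1/2) *
              (Phi ((w \<bullet> mu + b') / (norm w * sig) - eps / sig)
             + Phi ((w \<bullet> mu - b') / (norm w * sig) - eps / sig))"
proof -
  interpret prob_space M by fact
  note [measurable] = \<open>X \<in> borel_measurable M\<close> \<open>Y \<in> measurable M (count_space UNIV)\<close>
  have [measurable]: "(\<lambda>s. lin_classify w b (X s)) \<in> measurable M (count_space UNIV)"
    unfolding lin_classify_def by measurable
  define correct where "correct = {s\<in>space M. lin_classify w b (X s) = Y s}"
  define robust where "robust = {s\<in>space M. robustly_classified w b eps (X s) (Y s)}"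
  have events[measurable]: "correct \<in> events" "robust \<in> events"
    unfolding correct_def robust_def robustly_classified_def by measurable
  have "robust \<subseteq> correct"
    unfolding robust_def correct_def
    using robustly_classified_imp_lin_classify_eq[of eps] \<open>0 < eps\<close> by fastforce
  moreover have "{s\<in>space M. lin_classify w b (X s) = Y s \<and> has_adv_example w b eps (X s)}
      = correct - robust"
    using \<open>0 < eps\<close> by (auto simp: correct_def robust_def has_adv_example_iff)
  moreover have "prob correct = 1 - prob {s\<in>space M. lin_classify w b (X s) \<noteq> Y s}"
  proof -
    have "space M - correct = {s\<in>space M. lin_classify w b (X s) \<noteq> Y s}"
      by (auto simp: correct_def)
    then show ?thesis using prob_compl[OF events(1)] by simp
  qed
  moreover have "prob robust = (1/2) * (Phi ((w \<bullet> mu_p + b) / (norm w * sig) - eps / sig)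
                                     + Phi (- (w \<bullet> mu_m + b) / (norm w * sig) - eps / sig))"
    unfolding robust_def using assms(2-5) joint by (rule prob_robustly_classified)
  moreover have margins:
      "w \<bullet> ((1/2) *\<^sub>R (mu_p - mu_m)) + (w \<bullet> ((1/2) *\<^sub>R (mu_p + mu_m)) + b) = w \<bullet> mu_p + b"
      "w \<bullet> ((1/2) *\<^sub>R (mu_p - mu_m)) - (w \<bullet> ((1/2) *\<^sub>R (mu_p + mu_m)) + b) = - (w \<bullet> mu_m + b)"
    by (simp_all add: inner_diff_right inner_add_right algebra_simps)
  ultimately show ?thesis
    unfolding Let_def margins by (simp add: finite_measure_Diff)
qed

end
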